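(* Consider the $1$-center problem in $\mathbb{R}^1$ where object $i$ has its own maximum speed $v_i>0$. Let $v_M=\max_i v_i$ and $v_m=\min_i v_i$. There is an absolute constant $C$ such that on every instance $I$ with $n$ objects, the measure of the Round-robin strategy is at most $C\,\frac{v_M n}{v_m}\cdot \mathrm{OPT}(I)$.
   Context: Setting. There are $n\ge 2$ objects in $\mathbb{R}^d$; object $i$ follows a trajectory $p_i:[0,\infty)\to\mathbb{R}^d$ with $|p_i(t)-p_i(s)|\le v_i|t-s|$ for all $s,t$, where $v_i>0$ is a known speed bound for object $i$. The initial positions $p_i(0)$ are known. A query strategy queries one object at each time $t=1,2,3,\dots$; querying object $i$ at time $t$ reveals $p_i(t)$. For $t\ge 0$ let $\tau_i(t)$ be the last time $\le t$ at which object $i$ was queried (or $0$ if never). The uncertainty region of object $i$ at time $t$ is the closed ball $U_i(t)$ of radius $v_i(t-\tau_i(t))$ centered at $p_i(\tau_i(t))$. For a center function $f$ mapping an $n$-tuple of points to a point, the uncertainty region of the center at time $t$ is $\{f(q_1,\dots,q_n): q_i\in U_i(t)\}$. The size of a set is its diameter. The measure of a strategy on an instance is the supremum over $t\in\{1,2,\dots\}$ of the size of the center's uncertainty region at time $t$ (just after the query at time $t$). The optimal measure $\mathrm{OPT}(I)$ of an instance $I$ is the infimum of the measure over all query sequences, which may be chosen with full knowledge of the trajectories. The Round-robin strategy queries objects $1,2,\dots,n,1,2,\dots,n,\dots$ in a fixed cyclic order. Here $d=1$ and the center function is the $1$-center: for $x_1,\dots,x_n\in\mathbb{R}$ it is $(\max_i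 x_i+\min_i x_i)/2$. *)

theory Defs
  imports "HOL-Analysis.Analysis"
begin

text \<open>Objects are indexed 0,...,n-1. A trajectory assignment is p :: nat => real => real
  (only the values on [0,infinity) matter), speeds v :: nat => real.
  A query strategy is a sequence q :: nat => nat: at time t >= 1 it queries object q t.\<close>

definition valid_instance :: "nat \<Rightarrow> (nat \<Rightarrow> real) \<Rightarrow> (nat \<Rightarrow> real \<Rightarrow> real) \<Rightarrow> bool" where
  "valid_instance n v p \<longleftrightarrow> n \<ge> 2 \<and> (\<forall>i<n. v i > 0) \<and>
     (\<forall>i<n. \<forall>s t. 0 \<le> s \<longrightarrow> 0 \<le> t \<longrightarrow> \<bar>p i t - p i s\<bar> \<le> v i * \<bar>t - s\<bar>)"

definition valid_strategy :: "nat \<Rightarrow> (nat \<Rightarrow> nat) \<Rightarrow> bool" where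
  "valid_strategy n q \<longleftrightarrow> (\<forall>t\<ge>1. q t < n)"

definition last_query :: "(nat \<Rightarrow> nat) \<Rightarrow> nat \<Rightarrow> nat \<Rightarrow> nat" where
  "last_query q i t = Max ({s. 1 \<le> s \<and> s \<le> t \<and> q s = i} \<union> {0})"

definition uncertainty_region ::
    "(nat \<Rightarrow> real) \<Rightarrow> (nat \<Rightarrow> real \<Rightarrow> real) \<Rightarrow> (nat \<Rightarrow> nat) \<Rightarrow> nat \<Rightarrow> nat \<Rightarrow> real set" where
  "uncertainty_region v p q i t =
     cball (p i (real (last_query q i t))) (v i * (real t - real (last_query q i t)))"

definition one_center :: "nat \<Rightarrow> (nat \<Rightarrow> real) \<Rightarrow> real" where
  "one_center n x = (Max (x ` {..<n}) + Min (x ` {..<n})) / 2"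

definition center_region ::
    "nat \<Rightarrow> (nat \<Rightarrow> real) \<Rightarrow> (nat \<Rightarrow> real \<Rightarrow> real) \<Rightarrow> (nat \<Rightarrow> nat) \<Rightarrow> nat \<Rightarrow> real set" where
  "center_region n v p q t =
     {one_center n x | x. \<forall>i<n. x i \<in> uncertainty_region v p q i t}"

text \<open>Measure of a strategy: supremum over t = 1,2,... of the diameter of the center region
  (in the extended reals, since it may be unbounded).\<close>
definition strategy_measure ::
    "nat \<Rightarrow> (nat \<Rightarrow> real) \<Rightarrow> (nat \<Rightarrow> real \<Rightarrow> real) \<Rightarrow> (nat \<Rightarrow> nat) \<Rightarrow> ereal" where
  "strategy_measure n v p q = (SUP t\<in>{1..}. ereal (diameter (center_region n v p q t)))"

definition OPT :: "nat \<Rightarrow> (nat \<Rightarrow> real) \<Rightarrow> (nat \<Rightarrow> real \<Rightarrow> real) \<Rightarrow> ereal" where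
  "OPT n v p = (INF q\<in>{q. valid_strategy n q}. strategy_measure n v p q)"

definition round_robin :: "nat \<Rightarrow> nat \<Rightarrow> nat" where
  "round_robin n t = (t - 1) mod n"

end

theory Submission imports Defs begin

text \<open>The 1-center is 1-Lipschitz with respect to the sup-distance of its arguments, so its
  uncertainty region has diameter at most twice the largest uncertainty radius. Round-robin
  revisits every object within n steps, hence its radii never exceed v_M n and its measure is
  at most 2 v_M n. Conversely, any strategy has queried only one object at time 1, so all
  other objects have radius at least v_m; pushing all of them to the left ends, resp. to the
  right ends, of their balls moves the 1-center by at least v_m, so OPT \<ge> v_m.\<close>

lemma Max_image_le_Max_image_plus:
  fixes f g :: "'a \<Rightarrow> 'b::linordered_ab_group_add"
  assumes "finite I" "I \<noteq> {}" "\<And>i. i \<in> I \<Longrightarrow> f i \<le> g i + d"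
  shows "Max (f ` I) \<le> Max (g ` I) + d"
proof -
  have "Max (f ` I) \<in> f ` I" using assms(1,2) by simp
  then obtain i where "i \<in> I" "Max (f ` I) = f i" by blast
  then have "Max (f ` I) \<le> g i + d" using assms(3) by simp
  also have "\<dots> \<le> Max (g ` I) + d" using \<open>i \<in> I\<close> assms(1) by simp
  finally show ?thesis .
qed

lemma Min_image_le_Min_image_plus:
  fixes f g :: "'a \<Rightarrow> 'b::linordered_ab_group_add"
  assumes "finite I" "I \<noteq> {}" "\<And>i. i \<in> I \<Longrightarrow> f i \<le> g i + d"
  shows "Min (f ` I) \<le> Min (g ` I) + d"
proof -
  have "Min (g ` I) \<in> g ` I" using assms(1,2) by simp
  then obtain i where "i \<in> I" "Min (g ` I) = g i" by blast
  have "Min (f ` I) \<le> f i" using \<open>i \<in> I\<close> assms(1) by simp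
  also have "\<dots> \<le> Min (g ` I) + d" using \<open>i \<in> I\<close> \<open>Min (g ` I) = g i\<close> assms(3) by simp
  finally show ?thesis .
qed

lemma one_center_lipschitz:
  assumes "0 < n" "\<And>i. i < n \<Longrightarrow> \<bar>x i - y i\<bar> \<le> d"
  shows "\<bar>one_center n x - one_center n y\<bar> \<le> d"
proof -
  have ne: "{..<n} \<noteq> {}" using assms(1) by auto
  have "x i \<le> y i + d" "y i \<le> x i + d" if "i \<in> {..<n}" for i
    using assms(2)[of i] that by auto
  then have "Max (x ` {..<n}) \<le> Max (y ` {..<n}) + d" "Max (y ` {..<n}) \<le> Max (x ` {..<n}) + d"
    "Min (x ` {..<n}) \<le> Min (y ` {..<n}) + d" "Min (y ` {..<n}) \<le> Min (x ` {..<n}) + d"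
    using ne by (blast intro: Max_image_le_Max_image_plus Min_image_le_Min_image_plus)+
  then show ?thesis unfolding one_center_def by (simp add: abs_le_iff field_simps)
qed

lemma one_center_spread:
  fixes a b :: "nat \<Rightarrow> real"
  assumes "k < n" "2 \<le> n" "\<And>i. i < n \<Longrightarrow> a i \<le> b i"
    and "\<And>i. i < n \<Longrightarrow> i \<noteq> k \<Longrightarrow> 2 * w \<le> b i - a i"
  shows "w \<le> one_center n b - one_center n a"
proof -
  let ?I = "{..<n}"
  have "?I \<noteq> {}" using assms(2) by (simp add: lessThan_empty_iff)
  then have "Max (a ` ?I) \<in> a ` ?I" "Min (b ` ?I) \<in> b ` ?I" by simp_all
  then obtain M m where M: "M < n" "Max (a ` ?I) = a M" and m: "m < n" "Min (b ` ?I) = b m"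
    by auto
  have Max_b: "b i \<le> Max (b ` ?I)" and Min_a: "Min (a ` ?I) \<le> a i" if "i < n" for i
    using that by simp_all
  have "2 * w \<le> Max (b ` ?I) + Min (b ` ?I) - (Max (a ` ?I) + Min (a ` ?I))"
  proof (cases "M = k \<and> m = k")
    case True
    \<comment> \<open>then \<open>Max a \<le> Min b\<close>, and any other index separates \<open>Max b\<close> from \<open>Min a\<close> by 2w\<close>
    define j where "j = (if k = 0 then 1 else 0 :: nat)"
    have "j < n" "j \<noteq> k" using assms(2) unfolding j_def by auto
    moreover have "Max (a ` ?I) = a k" "Min (b ` ?I) = b k" using True M m by simp_all
    ultimately show ?thesis
      using assms(1) assms(3)[of k] assms(4)[of j] Max_b[of j] Min_a[of j] by linarith
  next
    case False
    then consider "M \<noteq> k" | "m \<noteq> k" by blast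
    then show ?thesis
    proof cases
      case 1
      then show ?thesis
        using M m assms(4)[of M] assms(3)[of m] Max_b[of M] Min_a[of m] by linarith
    next
      case 2
      then show ?thesis
        using M m assms(4)[of m] assms(3)[of M] Max_b[of M] Min_a[of m] by linarith
    qed
  qed
  then show ?thesis unfolding one_center_def by (simp add: field_simps)
qed

lemma center_region_dist_le:
  assumes "0 < n" "\<And>i. i < n \<Longrightarrow> v i * (real t - real (last_query q i t)) \<le> R"
    and "z \<in> center_region n v p q t" "z' \<in> center_region n v p q t"
  shows "\<bar>z - z'\<bar> \<le> 2 * R"
proof -
  obtain x y where z: "z = one_center n x" "z' = one_center n y"
    and xy: "\<And>i. i < n \<Longrightarrow> x i \<in> uncertainty_region v p q i t \<and> y i \<in> uncertainty_region v p q i t"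
    using assms(3,4) unfolding center_region_def by blast
  have "\<bar>x i - y i\<bar> \<le> 2 * R" if "i < n" for i
    using xy[OF that] assms(2)[OF that]
    unfolding uncertainty_region_def mem_cball dist_real_def by linarith
  then show ?thesis using one_center_lipschitz[OF assms(1)] z by blast
qed

lemma diameter_center_region_le:
  assumes "0 < n" "0 \<le> R" "\<And>i. i < n \<Longrightarrow> v i * (real t - real (last_query q i t)) \<le> R"
  shows "diameter (center_region n v p q t) \<le> 2 * R"
  using center_region_dist_le[OF assms(1,3)] assms(2)
  by (intro diameter_le) (auto simp: dist_real_def)

lemma finite_last_query_candidates:
  fixes q :: "nat \<Rightarrow> nat"
  shows "finite ({s. 1 \<le> s \<and> s \<le> t \<and> q s = i} \<union> {0})"
  by (rule finite_subset[of _ "{0..t}"]) auto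

lemma last_query_le: "last_query q i t \<le> t"
  using finite_last_query_candidates[of t q i] unfolding last_query_def by (subst Max_le_iff) auto

lemma last_query_ge: "1 \<le> s \<Longrightarrow> s \<le> t \<Longrightarrow> q s = i \<Longrightarrow> s \<le> last_query q i t"
  using finite_last_query_candidates[of t q i] unfolding last_query_def by (intro Max_ge) auto

lemma last_query_at_1: "last_query q i 1 = (if q 1 = i then 1 else 0)"
proof -
  have "{s. 1 \<le> s \<and> s \<le> (1::nat) \<and> q s = i} = (if q 1 = i then {1} else {})"
    by (auto simp: le_antisym)
  then show ?thesis unfolding last_query_def by auto
qed

lemma last_query_round_robin:
  assumes "i < n"
  shows "t \<le> last_query (round_robin n) i t + n"
proof (cases "t \<le> n")
  case False
  \<comment> \<open>the last time before t at which object i was queried\<close>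
  define r where "r = (t - 1 - i) mod n"
  define s where "s = t - r"
  have "r < n" using assms unfolding r_def by simp
  then have s: "1 \<le> s" "s \<le> t" "t \<le> s + n" using False unfolding s_def by auto
  have "(t - 1 - i) div n * n + r = t - 1 - i" unfolding r_def by simp
  then have "s - 1 = i + n * ((t - 1 - i) div n)"
    using False assms unfolding s_def by (simp add: mult.commute)
  then have "round_robin n s = i" unfolding round_robin_def using assms by simp
  with s show ?thesis using last_query_ge[of s t "round_robin n" i] by linarith
qed simp

lemma round_robin_measure_le:
  assumes "valid_instance n v p"
  shows "strategy_measure n v p (round_robin n) \<le> ereal (2 * (Max (v ` {..<n}) * real n))"
  unfolding strategy_measure_def
proof (rule SUP_least)
  fix t :: nat
  have n: "0 < n" and v: "\<And>i. i < n \<Longrightarrow> 0 < v i" using assms unfolding valid_instance_def by auto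
  have vM: "v i \<le> Max (v ` {..<n})" if "i < n" for i using that by simp
  have "v i * (real t - real (last_query (round_robin n) i t)) \<le> Max (v ` {..<n}) * real n"
    if "i < n" for i
    using last_query_le[of "round_robin n" i t] last_query_round_robin[OF that, of t] v[OF that] vM[OF that]
    by (intro mult_mono) auto
  moreover have "0 \<le> Max (v ` {..<n}) * real n" using v[OF n] vM[OF n] by simp
  ultimately show "ereal (diameter (center_region n v p (round_robin n) t))
      \<le> ereal (2 * (Max (v ` {..<n}) * real n))"
    using diameter_center_region_le[OF n] by simp
qed

lemma diameter_center_region_at_1_ge:
  assumes "valid_instance n v p" "valid_strategy n q"
  shows "Min (v ` {..<n}) \<le> diameter (center_region n v p q 1)"
proof -
  have n: "2 \<le> n" and v: "\<And>i. i < n \<Longrightarrow> 0 < v i" using assms(1) unfolding valid_instance_def by auto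
  have k: "q 1 < n" using assms(2) unfolding valid_strategy_def by auto
  define c where "c i = p i (real (last_query q i 1))" for i
  define r where "r i = v i * (1 - real (last_query q i 1))" for i
  have r: "0 \<le> r i" "r i \<le> Max (v ` {..<n})" if "i < n" for i
  proof -
    have "0 < v i" "v i \<le> Max (v ` {..<n})" using v[OF that] that by simp_all
    then show "0 \<le> r i" "r i \<le> Max (v ` {..<n})" unfolding r_def last_query_at_1 by auto
  qed
  have mem: "one_center n x \<in> center_region n v p q 1" if "\<And>i. i < n \<Longrightarrow> \<bar>x i - c i\<bar> \<le> r i" for x
    using that unfolding center_region_def uncertainty_region_def c_def r_def
    by (auto simp: dist_real_def abs_minus_commute intro!: exI[of _ x])
  let ?lo = "one_center n (\<lambda>i. c i - r i)" and ?hi = "one_center n (\<lambda>i. c i + r i)"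
  have lo: "?lo \<in> center_region n v p q 1" and hi: "?hi \<in> center_region n v p q 1"
    by (intro mem; simp add: r(1))+
  have "\<bar>z - ?lo\<bar> \<le> 2 * Max (v ` {..<n})" if "z \<in> center_region n v p q 1" for z
    using center_region_dist_le[OF _ _ that lo] n r(2) unfolding r_def by simp
  then have "bounded (center_region n v p q 1)"
    unfolding bounded_def dist_real_def by (metis abs_minus_commute)
  then have "dist ?hi ?lo \<le> diameter (center_region n v p q 1)"
    using diameter_bounded_bound lo hi by blast
  moreover have "Min (v ` {..<n}) \<le> ?hi - ?lo"
  proof (rule one_center_spread[OF k n])
    fix i assume "i < n"
    then show "c i - r i \<le> c i + r i" using r(1) by simp
    assume "i \<noteq> q 1"
    then show "2 * Min (v ` {..<n}) \<le> c i + r i - (c i - r i)"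
      using \<open>i < n\<close> unfolding r_def last_query_at_1 by simp
  qed
  ultimately show ?thesis by (simp add: dist_real_def)
qed

lemma OPT_ge_min_speed:
  assumes "valid_instance n v p"
  shows "ereal (Min (v ` {..<n})) \<le> OPT n v p"
  unfolding OPT_def strategy_measure_def
proof (rule INF_greatest)
  fix q assume "q \<in> {q. valid_strategy n q}"
  then have "ereal (Min (v ` {..<n})) \<le> ereal (diameter (center_region n v p q 1))"
    using diameter_center_region_at_1_ge[OF assms] by simp
  also have "\<dots> \<le> (SUP t\<in>{1..}. ereal (diameter (center_region n v p q t)))"
    by (rule SUP_upper) simp
  finally show "ereal (Min (v ` {..<n})) \<le> (SUP t\<in>{1..}. ereal (diameter (center_region n v p q t)))" .
qed

theorem proposition2:
  shows "\<exists>C::real. \<forall>n (v::nat \<Rightarrow> real) (p::nat \<Rightarrow> real \<Rightarrow> real).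
    valid_instance n v p \<longrightarrow>
    strategy_measure n v p (round_robin n)
      \<le> ereal (C * (Max (v ` {..<n}) * real n) / Min (v ` {..<n})) * OPT n v p"
proof (intro exI allI impI)
  fix n v p assume inst: "valid_instance n v p"
  define vM where "vM = Max (v ` {..<n})"
  define vm where "vm = Min (v ` {..<n})"
  have "0 < n" "\<forall>i<n. 0 < v i" using inst unfolding valid_instance_def by auto
  then have "Min (v ` {..<n}) \<in> v ` {..<n}" "v 0 \<le> Max (v ` {..<n})" "0 < v 0"
    by (auto simp: lessThan_empty_iff intro!: Min_in)
  then have "0 < vm" "0 \<le> vM" unfolding vm_def vM_def using \<open>\<forall>i<n. 0 < v i\<close> by auto
  have "strategy_measure n v p (round_robin n) \<le> ereal (2 * (vM * real n))"
    using round_robin_measure_le[OF inst] unfolding vM_def .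
  also have "\<dots> = ereal (2 * (vM * real n) / vm) * ereal vm"
    using \<open>0 < vm\<close> by simp
  also have "\<dots> \<le> ereal (2 * (vM * real n) / vm) * OPT n v p"
    using OPT_ge_min_speed[OF inst] \<open>0 < vm\<close> \<open>0 \<le> vM\<close> unfolding vm_def
    by (intro ereal_mult_left_mono) auto
  finally show "strategy_measure n v p (round_robin n)
      \<le> ereal (2 * (Max (v ` {..<n}) * real n) / Min (v ` {..<n})) * OPT n v p"
    unfolding vM_def vm_def .
qed

end
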